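(* Let $m,n\ge1$, let $g_{12}$ be an arbitrary complex $2m\times 2n$ matrix, and put $g_{21}=-U_{2n}J_{2n}g_{12}^{\tau}J_{2m}U_{2m}$ (equivalently, $g_{21}$ is an arbitrary $2n\times2m$ matrix and $g_{12}$ is determined from this relation). Let $G(\lambda)$, $\theta(\lambda)$, $\widehat u(\lambda)$, $u(\mu)$ be as defined in the context. Then, as rational functions of $\lambda=(\lambda_1,\lambda_2)$ and $\mu=(\mu_1,\mu_2)$, $$\mathrm{i}(\lambda_1-\mu_1)^{-1}u(\mu)P_1\widehat u(\lambda)=\mathrm{i}(\lambda_2-\mu_2)^{-1}u(\mu)P_2\widehat u(\lambda),$$ i.e. the function $\omega(\lambda,\mu):=\mathrm{i}(\lambda_p-\mu_p)^{-1}u(\mu)P_p\widehat u(\lambda)$ is the same for $p=1$ and $p=2$.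
   Context: $\mathrm{i}$ is the imaginary unit, $I_r$ the $r\times r$ identity, $\mathbf 1_r$ the all-ones column of length $r$, $^\tau$ transpose. For $N\ge1$, $\mathcal{A}^{(N)}=\{a_{j-\ell}\}_{j,\ell=1}^N$ with $a_r=0$ ($r<0$), $a_0=\mathrm{i}/2$, $a_r=\mathrm{i}$ ($r>0$); $\mathcal A_1=\mathcal A^{(n)}$, $\mathcal A_2=\mathcal A^{(m)}$. $U_{2N}$ is the $2N\times 2N$ matrix with ones on the antidiagonal and zeros elsewhere; $J_{2N}=\mathrm{diag}\{I_N,-I_N\}$. $P_1=\mathrm{diag}\{I_{2m},0_{2n}\}$, $P_2=I_{2(m+n)}-P_1$. $$G(\lambda)=\begin{bmatrix}\mathrm{diag}\{\mathcal A_2-\lambda_2I_m,\mathcal A_2-\lambda_2I_m\}&g_{12}\\ g_{21}&\mathrm{diag}\{\mathcal A_1-\lambda_1I_n,\mathcal A_1-\lambda_1I_n\}\end{bmatrix}.$$ $\theta(\lambda)$ is the polynomial with $\theta^2=\det G$ and coefficient of $\lambda_1^n\lambda_2^m$ equal to $-1$. Then $\widehat u(\lambda)=-\mathrm{i}(\lambda_1-\frac{\mathrm{i}}2)^{-n}(\lambda_2-\frac{\mathrm{i}}2)^{-m}\theta(\lambda)G(\lambda)^{-1}\mathrm{col}[0,\mathbf 1_m,0,\mathbf 1_n]$ (zero blocks of heights $m$ and $n$) and $u(\mu)=\big(\frac{\mu_1-\mathrm{i}/2}{\mu_1+\mathrm{i}/2}\big)^n\big(\frac{\mu_2-\mathrm{i}/2}{\mu_2+\mathrm{i}/2}\big)^m\widehat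 u(\mu)^{\tau}\mathrm{diag}\{J_{2m}U_{2m},J_{2n}U_{2n}\}$. *)

theory Defs
  imports "Jordan_Normal_Form.Gauss_Jordan_Elimination" "Jordan_Normal_Form.Determinant" "HOL-Computational_Algebra.Polynomial"
begin

(* Toeplitz matrix A^(N) = {a_{j-l}}, a_r = 0 (r<0), a_0 = i/2, a_r = i (r>0); indices 0-based *)
definition A_mat :: "nat \<Rightarrow> complex mat" where
  "A_mat N = mat N N (\<lambda>(j,l). if j < l then 0 else if j = l then \<i>/2 else \<i>)"

definition U_mat :: "nat \<Rightarrow> complex mat" where
  "U_mat K = mat K K (\<lambda>(j,l). if j + l + 1 = K then 1 else 0)"

definition J_mat :: "nat \<Rightarrow> complex mat" where
  "J_mat N = mat (2*N) (2*N) (\<lambda>(j,l). if j = l then (if j < N then 1 else -1) else 0)"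

definition diag2 :: "complex mat \<Rightarrow> complex mat" where
  "diag2 M = four_block_mat M (0\<^sub>m (dim_row M) (dim_col M)) (0\<^sub>m (dim_row M) (dim_col M)) M"

definition g21_of :: "nat \<Rightarrow> nat \<Rightarrow> complex mat \<Rightarrow> complex mat" where
  "g21_of m n g12 = - (U_mat (2*n) * J_mat n * transpose_mat g12 * J_mat m * U_mat (2*m))"

definition G_mat :: "nat \<Rightarrow> nat \<Rightarrow> complex mat \<Rightarrow> complex \<Rightarrow> complex \<Rightarrow> complex mat" where
  "G_mat m n g12 l1 l2 =
     four_block_mat (diag2 (A_mat m - l2 \<cdot>\<^sub>m 1\<^sub>m m)) g12
                    (g21_of m n g12) (diag2 (A_mat n - l1 \<cdot>\<^sub>m 1\<^sub>m n))"

definition minv :: "complex mat \<Rightarrow> complex mat" where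
  "minv M = (case mat_inverse M of Some B \<Rightarrow> B | None \<Rightarrow> 0\<^sub>m (dim_row M) (dim_col M))"

(* col[0_m, 1_m, 0_n, 1_n] *)
definition e_vec :: "nat \<Rightarrow> nat \<Rightarrow> complex vec" where
  "e_vec m n = vec (2*m + 2*n) (\<lambda>k. if (m \<le> k \<and> k < 2*m) \<or> 2*m + n \<le> k then 1 else 0)"

(* bivariate polynomial as nested polynomial: outer variable l1, inner variable l2;
   the coefficient of l1^i l2^j is coeff (coeff p i) j *)
definition poly2 :: "complex poly poly \<Rightarrow> complex \<Rightarrow> complex \<Rightarrow> complex" where
  "poly2 p l1 l2 = poly (map_poly (\<lambda>q. poly q l2) p) l1"

(* hat u(lambda) as a column vector, theta given by the polynomial p *)
definition uhat :: "nat \<Rightarrow> nat \<Rightarrow> complex mat \<Rightarrow> complex poly poly \<Rightarrow> complex \<Rightarrow> complex \<Rightarrow> complex vec" where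
  "uhat m n g12 p l1 l2 =
     (- \<i> * inverse ((l1 - \<i>/2) ^ n) * inverse ((l2 - \<i>/2) ^ m) * poly2 p l1 l2)
       \<cdot>\<^sub>v (minv (G_mat m n g12 l1 l2) *\<^sub>v e_vec m n)"

(* u(mu) as a row vector (represented as a vec): scalar * uhat(mu)^T * diag{J U, J U} *)
definition u_row :: "nat \<Rightarrow> nat \<Rightarrow> complex mat \<Rightarrow> complex poly poly \<Rightarrow> complex \<Rightarrow> complex \<Rightarrow> complex vec" where
  "u_row m n g12 p k1 k2 =
     (((k1 - \<i>/2) / (k1 + \<i>/2)) ^ n * ((k2 - \<i>/2) / (k2 + \<i>/2)) ^ m)
       \<cdot>\<^sub>v (transpose_mat (four_block_mat (J_mat m * U_mat (2*m)) (0\<^sub>m (2*m) (2*n))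
                                          (0\<^sub>m (2*n) (2*m)) (J_mat n * U_mat (2*n)))
            *\<^sub>v uhat m n g12 p k1 k2)"

definition P1_mat :: "nat \<Rightarrow> nat \<Rightarrow> complex mat" where
  "P1_mat m n = mat (2*m + 2*n) (2*m + 2*n) (\<lambda>(j,l). if j = l \<and> j < 2*m then 1 else 0)"

definition P2_mat :: "nat \<Rightarrow> nat \<Rightarrow> complex mat" where
  "P2_mat m n = 1\<^sub>m (2*m + 2*n) - P1_mat m n"

end

theory Submission
  imports Defs
begin

(* Write Q = diag{J U, -J U} (blocks of sizes 2m and 2n); Q is a skew-symmetric signed permutation
   matrix. Persymmetry of the Toeplitz matrices A_p, together with the relation tying g21 to g12,
   gives the intertwining identity

     G(mu)^T Q = Q G(lambda) + Q ((lambda2 - mu2) P1 + (lambda1 - mu1) P2).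

   For mu = lambda it says that Q G(lambda)^-1 is skew, so e^T Q G(lambda)^-1 e = 0 for every e.
   Pairing the identity with w = G(mu)^-1 e on the left and v = G(lambda)^-1 e on the right thus
   annihilates both G-terms and leaves (lambda2 - mu2) w^T Q P1 v + (lambda1 - mu1) w^T Q P2 v = 0.
   Up to one common scalar, u(mu) P_p uhat(lambda) is w^T diag{J U, J U} P_p v = +- w^T Q P_p v,
   which is the claim. *)

definition monomial_mat :: "nat \<Rightarrow> (nat \<Rightarrow> nat) \<Rightarrow> (nat \<Rightarrow> 'a::zero) \<Rightarrow> 'a mat" where
  "monomial_mat N \<sigma> f = mat N N (\<lambda>(i,j). if j = \<sigma> i then f i else 0)"

lemma monomial_mat_carrier[simp]: "monomial_mat N \<sigma> f \<in> carrier_mat N N"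
  by (simp add: monomial_mat_def)

lemma monomial_mat_dim[simp]:
  "dim_row (monomial_mat N \<sigma> f) = N" "dim_col (monomial_mat N \<sigma> f) = N"
  by (simp_all add: monomial_mat_def)

lemma index_monomial_mat[simp]:
  "i < N \<Longrightarrow> j < N \<Longrightarrow> monomial_mat N \<sigma> f $$ (i,j) = (if j = \<sigma> i then f i else 0)"
  by (simp add: monomial_mat_def)

lemma monomial_mat_mult_left:
  fixes f :: "nat \<Rightarrow> 'a::semiring_0"
  assumes \<sigma>: "\<And>i. i < N \<Longrightarrow> \<sigma> i < N" and A: "A \<in> carrier_mat N nc"
  shows "monomial_mat N \<sigma> f * A = mat N nc (\<lambda>(i,j). f i * A $$ (\<sigma> i, j))"
proof (rule eq_matI, insert A, auto simp: scalar_prod_def, goal_cases)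
  case (1 i j)
  thus ?case using \<sigma> by (subst sum.remove[of _ "\<sigma> i"]) auto
qed

lemma monomial_mat_mult_right:
  fixes f :: "nat \<Rightarrow> 'a::semiring_0"
  assumes \<sigma>: "\<And>i. i < N \<Longrightarrow> \<sigma> i < N \<and> \<sigma> (\<sigma> i) = i" and A: "A \<in> carrier_mat nr N"
  shows "A * monomial_mat N \<sigma> f = mat nr N (\<lambda>(i,j). A $$ (i, \<sigma> j) * f (\<sigma> j))"
proof (rule eq_matI, insert A, auto simp: scalar_prod_def, goal_cases)
  case (1 i j)
  have "j = \<sigma> x \<longleftrightarrow> x = \<sigma> j" if "x < N" for x using \<sigma> that 1 by metis
  thus ?case using \<sigma> 1 by (subst sum.remove[of _ "\<sigma> j"]) auto
qed

lemma transpose_monomial_mat: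
  assumes \<sigma>: "\<And>i. i < N \<Longrightarrow> \<sigma> i < N \<and> \<sigma> (\<sigma> i) = i"
  shows "transpose_mat (monomial_mat N \<sigma> f) = monomial_mat N \<sigma> (\<lambda>i. f (\<sigma> i))"
  by (rule eq_matI) (use \<sigma> in \<open>auto simp: monomial_mat_def\<close>)

lemma smult_mat_mult_mat_vec:
  "dim_vec v = dim_col A \<Longrightarrow> (k \<cdot>\<^sub>m A) *\<^sub>v v = (k::'a::comm_semiring_0) \<cdot>\<^sub>v (A *\<^sub>v v)"
  by (intro eq_vecI) (auto simp: scalar_prod_def sum_distrib_left mult.assoc intro!: sum.cong)

lemma scalar_prod_smult_add_mat_vec:
  fixes A B :: "'a::comm_ring_1 mat"
  assumes A: "A \<in> carrier_mat nr nc" and B: "B \<in> carrier_mat nr nc"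
    and v: "v \<in> carrier_vec nc" and w: "w \<in> carrier_vec nr"
  shows "w \<bullet> ((a \<cdot>\<^sub>m A + b \<cdot>\<^sub>m B) *\<^sub>v v) = a * (w \<bullet> (A *\<^sub>v v)) + b * (w \<bullet> (B *\<^sub>v v))"
  using assms
  by (simp add: add_mult_distrib_mat_vec[of _ nr nc] smult_mat_mult_mat_vec scalar_prod_add_distrib[of w nr])

lemma skew_pairing_vanishes:
  fixes Q G :: "'a::field_char_0 mat"
  assumes Q: "Q \<in> carrier_mat N N" and G: "G \<in> carrier_mat N N" and z: "z \<in> carrier_vec N"
    and skew: "transpose_mat Q = - Q" and sym: "transpose_mat G * Q = Q * G"
  shows "(G *\<^sub>v z) \<bullet> (Q *\<^sub>v z) = 0"
proof -
  have Qz: "Q *\<^sub>v z \<in> carrier_vec N" and Gz: "G *\<^sub>v z \<in> carrier_vec N" using Q G z by auto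
  have "(G *\<^sub>v z) \<bullet> (Q *\<^sub>v z) = z \<bullet> ((transpose_mat G * Q) *\<^sub>v z)"
    using transpose_vec_mult_scalar[of "transpose_mat G" N N "Q *\<^sub>v z" z] G Q z by simp
  also have "\<dots> = (transpose_mat Q *\<^sub>v z) \<bullet> (G *\<^sub>v z)"
    unfolding sym using transpose_vec_mult_scalar[OF Q Gz z] G Q z by simp
  also have "\<dots> = - ((G *\<^sub>v z) \<bullet> (Q *\<^sub>v z))"
    using comm_scalar_prod[OF Qz Gz] G Q z unfolding skew by simp
  finally show ?thesis by simp
qed

lemma intertwined_pairing_vanishes:
  fixes Q Gl Gk R :: "'a::field_char_0 mat"
  assumes Q: "Q \<in> carrier_mat N N" and Gl: "Gl \<in> carrier_mat N N" and Gk: "Gk \<in> carrier_mat N N"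
    and R: "R \<in> carrier_mat N N" and v: "v \<in> carrier_vec N" and w: "w \<in> carrier_vec N"
    and skew: "transpose_mat Q = - Q"
    and sym_l: "transpose_mat Gl * Q = Q * Gl" and sym_k: "transpose_mat Gk * Q = Q * Gk"
    and intertwine: "transpose_mat Gk * Q = Q * Gl + R"
    and same_rhs: "Gk *\<^sub>v w = Gl *\<^sub>v v"
  shows "w \<bullet> (R *\<^sub>v v) = 0"
proof -
  have Qw: "Q *\<^sub>v w \<in> carrier_vec N" and Glv: "Gl *\<^sub>v v \<in> carrier_vec N" using Q Gl v w by auto
  have "w \<bullet> ((transpose_mat Gk * Q) *\<^sub>v v) = (Gk *\<^sub>v w) \<bullet> (Q *\<^sub>v v)"
    using transpose_vec_mult_scalar[of "transpose_mat Gk" N N "Q *\<^sub>v v" w] Gk Q v w by simp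
  also have "\<dots> = 0"
    unfolding same_rhs by (rule skew_pairing_vanishes[OF Q Gl v skew sym_l])
  finally have left: "w \<bullet> ((transpose_mat Gk * Q) *\<^sub>v v) = 0" .
  have "w \<bullet> ((Q * Gl) *\<^sub>v v) = (transpose_mat Q *\<^sub>v w) \<bullet> (Gk *\<^sub>v w)"
    using transpose_vec_mult_scalar[OF Q Glv w] Q Gl v unfolding same_rhs by simp
  also have "\<dots> = - ((Gk *\<^sub>v w) \<bullet> (Q *\<^sub>v w))"
    using comm_scalar_prod[OF Qw, of "Gk *\<^sub>v w"] Gk Q w unfolding skew by simp
  also have "\<dots> = 0"
    using skew_pairing_vanishes[OF Q Gk w skew sym_k] by simp
  finally have right: "w \<bullet> ((Q * Gl) *\<^sub>v v) = 0" .
  have "w \<bullet> ((transpose_mat Gk * Q) *\<^sub>v v) = w \<bullet> ((Q * Gl) *\<^sub>v v) + w \<bullet> (R *\<^sub>v v)"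
    unfolding intertwine using Q Gl R v w
    by (simp add: add_mult_distrib_mat_vec[of _ N N] scalar_prod_add_distrib[of w N])
  with left right show ?thesis by simp
qed

lemma minv_carrier: "G \<in> carrier_mat N N \<Longrightarrow> minv G \<in> carrier_mat N N"
  unfolding minv_def by (cases "mat_inverse G") (auto dest: mat_inverse(2))

lemma mult_minv:
  assumes G: "G \<in> carrier_mat N N" and det: "det G \<noteq> 0"
  shows "G * minv G = 1\<^sub>m N"
proof -
  obtain B where "mat_inverse G = Some B"
    using mat_inverse(1)[OF G] det_non_zero_imp_unit[OF G det] by fastforce
  then show ?thesis using mat_inverse(2)[OF G] unfolding minv_def by auto
qed

lemma mult_minv_mat_vec:
  assumes G: "G \<in> carrier_mat N N" and "det G \<noteq> 0" and x: "x \<in> carrier_vec N"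
  shows "G *\<^sub>v (minv G *\<^sub>v x) = x"
  using mult_minv[OF assms(1,2)] minv_carrier[OF G] G x
  by (metis assoc_mult_mat_vec one_mult_mat_vec)

definition J_sign :: "nat \<Rightarrow> nat \<Rightarrow> complex" where
  "J_sign N i = (if i < N then 1 else -1)"

lemma J_sign_rev[simp]: "i < 2*N \<Longrightarrow> J_sign N (2*N - Suc i) = - J_sign N i"
  by (auto simp: J_sign_def)

lemma J_mat_diag: "J_mat N = mat_diag (2*N) (J_sign N)"
  by (rule eq_matI) (auto simp: J_mat_def mat_diag_def J_sign_def)

lemma U_mat_monomial: "U_mat K = monomial_mat K (\<lambda>i. K - Suc i) (\<lambda>_. 1)"
  by (rule eq_matI) (auto simp: U_mat_def)

lemma rev_involution: "i < K \<Longrightarrow> K - Suc i < K \<and> K - Suc (K - Suc i) = i"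
  by auto

lemma J_mat_mult_U_mat: "J_mat N * U_mat (2*N) = monomial_mat (2*N) (\<lambda>i. 2*N - Suc i) (J_sign N)"
  unfolding J_mat_diag U_mat_monomial
  by (subst mat_diag_mult_left[of _ _ "2*N"]) (auto intro!: eq_matI)

lemma g21_of_index:
  assumes g12: "g12 \<in> carrier_mat (2*m) (2*n)" and a: "a < 2*n" and b: "b < 2*m"
  shows "g21_of m n g12 $$ (a,b) = - J_sign n a * J_sign m b * g12 $$ (2*m - Suc b, 2*n - Suc a)"
proof -
  have UJ: "U_mat (2*n) * J_mat n = monomial_mat (2*n) (\<lambda>i. 2*n - Suc i) (\<lambda>i. - J_sign n i)"
    unfolding J_mat_diag U_mat_monomial
    by (subst mat_diag_mult_right[of _ "2*n"]) (auto intro!: eq_matI)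
  have "g21_of m n g12 = - mat (2*n) (2*m) (\<lambda>(i,j).
      - J_sign n i * g12 $$ (2*m - Suc j, 2*n - Suc i) * J_sign m (2*m - Suc j))"
    unfolding g21_of_def UJ using g12
    by (simp add: monomial_mat_mult_left[of "2*n" _ _ "2*m"] J_mat_diag
        mat_diag_mult_right[of _ "2*n" "2*m"] U_mat_monomial
        monomial_mat_mult_right[of "2*m" _ _ "2*n"] rev_involution, intro eq_matI) auto
  thus ?thesis using a b by simp
qed

definition pencil_block_entry :: "nat \<Rightarrow> complex \<Rightarrow> nat \<Rightarrow> nat \<Rightarrow> complex" where
  "pencil_block_entry N c a b =
     (if (a < N) = (b < N) \<and> b \<le> a then (if a = b then \<i>/2 - c else \<i>) else 0)"

lemma diag2_pencil_carrier[simp]: "diag2 (A_mat N - c \<cdot>\<^sub>m 1\<^sub>m N) \<in> carrier_mat (2*N) (2*N)"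
proof -
  have "diag2 (A_mat N - c \<cdot>\<^sub>m 1\<^sub>m N) \<in> carrier_mat (N + N) (N + N)"
    unfolding diag2_def by (rule four_block_carrier_mat) (auto simp: A_mat_def)
  thus ?thesis by (simp add: mult_2)
qed

lemma index_diag2_pencil:
  "a < 2*N \<Longrightarrow> b < 2*N \<Longrightarrow> diag2 (A_mat N - c \<cdot>\<^sub>m 1\<^sub>m N) $$ (a,b) = pencil_block_entry N c a b"
  by (cases "a < N"; cases "b < N") (auto simp: diag2_def A_mat_def pencil_block_entry_def)

lemma pencil_block_entry_persymmetric:
  assumes "a < 2*N" "b < 2*N"
  shows "pencil_block_entry N c (2*N - Suc b) a * J_sign N (2*N - Suc b)
       = J_sign N a * pencil_block_entry N d (2*N - Suc a) b
         + (d - c) * (if b = 2*N - Suc a then J_sign N a else 0)"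
  using assms by (auto simp: pencil_block_entry_def J_sign_def algebra_simps)

lemma G_mat_carrier[simp]:
  "g12 \<in> carrier_mat (2*m) (2*n) \<Longrightarrow> G_mat m n g12 l1 l2 \<in> carrier_mat (2*m + 2*n) (2*m + 2*n)"
  unfolding G_mat_def by (rule four_block_carrier_mat) auto

lemma index_G_mat:
  assumes g12: "g12 \<in> carrier_mat (2*m) (2*n)" and "i < 2*m + 2*n" "j < 2*m + 2*n"
  shows "G_mat m n g12 l1 l2 $$ (i,j) =
    (if i < 2*m then if j < 2*m then pencil_block_entry m l2 i j else g12 $$ (i, j - 2*m)
     else if j < 2*m then g21_of m n g12 $$ (i - 2*m, j)
     else pencil_block_entry n l1 (i - 2*m) (j - 2*m))"
  using assms carrier_matD[OF diag2_pencil_carrier, of m l2] carrier_matD[OF diag2_pencil_carrier, of n l1]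
  by (auto simp: G_mat_def index_diag2_pencil)

text \<open>The permutation reversing each of the blocks \<open>{..<K}\<close> and \<open>{K..<K+L}\<close>; with it,
  \<open>diag{J\<^sub>2\<^sub>m U\<^sub>2\<^sub>m, J\<^sub>2\<^sub>n U\<^sub>2\<^sub>n}\<close> and \<open>diag{J\<^sub>2\<^sub>m U\<^sub>2\<^sub>m, -J\<^sub>2\<^sub>n U\<^sub>2\<^sub>n}\<close>
  become the monomial matrices \<open>JU_mat\<close> and \<open>JU_skew_mat\<close>.\<close>

definition block_rev :: "nat \<Rightarrow> nat \<Rightarrow> nat \<Rightarrow> nat" where
  "block_rev K L i = (if i < K then K - Suc i else K + (L - Suc (i - K)))"

lemma block_rev_involution:
  "i < K + L \<Longrightarrow> block_rev K L i < K + L \<and> block_rev K L (block_rev K L i) = i"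
  by (auto simp: block_rev_def)

lemma block_rev_upper:
  assumes "2*m \<le> i" "i < 2*m + 2*n"
  obtains a a' where "i - 2*m = a" "block_rev (2*m) (2*n) i = 2*m + a'" "a < 2*n" "a' < 2*n"
    "2*n - Suc a = a'" "2*n - Suc a' = a"
  using assms by (intro that[of "i - 2*m" "2*n - Suc (i - 2*m)"]) (auto simp: block_rev_def)

definition JU_sign :: "nat \<Rightarrow> nat \<Rightarrow> nat \<Rightarrow> complex" where
  "JU_sign m n i = (if i < 2*m then J_sign m i else J_sign n (i - 2*m))"

definition JU_skew_sign :: "nat \<Rightarrow> nat \<Rightarrow> nat \<Rightarrow> complex" where
  "JU_skew_sign m n i = (if i < 2*m then J_sign m i else - J_sign n (i - 2*m))"

definition JU_mat :: "nat \<Rightarrow> nat \<Rightarrow> complex mat" where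
  "JU_mat m n = monomial_mat (2*m + 2*n) (block_rev (2*m) (2*n)) (JU_sign m n)"

definition JU_skew_mat :: "nat \<Rightarrow> nat \<Rightarrow> complex mat" where
  "JU_skew_mat m n = monomial_mat (2*m + 2*n) (block_rev (2*m) (2*n)) (JU_skew_sign m n)"

lemma JU_mat_carrier[simp]: "JU_mat m n \<in> carrier_mat (2*m + 2*n) (2*m + 2*n)"
  by (simp add: JU_mat_def)

lemma JU_skew_mat_carrier[simp]: "JU_skew_mat m n \<in> carrier_mat (2*m + 2*n) (2*m + 2*n)"
  by (simp add: JU_skew_mat_def)

lemma JU_mat_dim[simp]: "dim_row (JU_mat m n) = 2*m + 2*n" "dim_col (JU_mat m n) = 2*m + 2*n"
  by (simp_all add: JU_mat_def)

lemma JU_mat_four_block: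
  "four_block_mat (J_mat m * U_mat (2*m)) (0\<^sub>m (2*m) (2*n)) (0\<^sub>m (2*n) (2*m)) (J_mat n * U_mat (2*n))
   = JU_mat m n"
  unfolding J_mat_mult_U_mat JU_mat_def by (rule eq_matI) (auto simp: block_rev_def JU_sign_def)

lemma transpose_JU_skew_mat: "transpose_mat (JU_skew_mat m n) = - JU_skew_mat m n"
  unfolding JU_skew_mat_def
  by (subst transpose_monomial_mat, use block_rev_involution in blast)
    (rule eq_matI, auto simp: block_rev_def JU_skew_sign_def J_sign_def)

lemma P1_mat_diag: "P1_mat m n = mat_diag (2*m + 2*n) (\<lambda>j. if j < 2*m then 1 else 0)"
  by (rule eq_matI) (auto simp: P1_mat_def mat_diag_def)

lemma P2_mat_diag: "P2_mat m n = mat_diag (2*m + 2*n) (\<lambda>j. if j < 2*m then 0 else 1)"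
  by (rule eq_matI) (auto simp: P2_mat_def P1_mat_def mat_diag_def)

lemma P1_mat_carrier[simp]: "P1_mat m n \<in> carrier_mat (2*m + 2*n) (2*m + 2*n)"
  by (simp add: P1_mat_def)

lemma P2_mat_carrier[simp]: "P2_mat m n \<in> carrier_mat (2*m + 2*n) (2*m + 2*n)"
  unfolding P2_mat_def by (intro minus_carrier_mat) auto

lemma JU_mat_mult_P1: "JU_mat m n * P1_mat m n = JU_skew_mat m n * P1_mat m n"
  unfolding P1_mat_diag JU_mat_def JU_skew_mat_def
  by (simp add: mat_diag_mult_right[of _ "2*m+2*n"])
    (rule eq_matI, auto simp: block_rev_def JU_sign_def JU_skew_sign_def)

lemma JU_mat_mult_P2: "JU_mat m n * P2_mat m n = - (JU_skew_mat m n * P2_mat m n)"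
  unfolding P2_mat_diag JU_mat_def JU_skew_mat_def
  by (simp add: mat_diag_mult_right[of _ "2*m+2*n"])
    (rule eq_matI, auto simp: block_rev_def JU_sign_def JU_skew_sign_def)

lemma intertwining_entry_diagonal_blocks:
  assumes g12: "g12 \<in> carrier_mat (2*m) (2*n)" and i: "i < 2*m + 2*n" and j: "j < 2*m + 2*n"
    and same_block: "(i < 2*m) = (j < 2*m)"
  defines "\<sigma> \<equiv> block_rev (2*m) (2*n)"
  shows "G_mat m n g12 k1 k2 $$ (\<sigma> j, i) * JU_skew_sign m n (\<sigma> j)
       = JU_skew_sign m n i * G_mat m n g12 l1 l2 $$ (\<sigma> i, j)
         + (if j < 2*m then l2 - k2 else l1 - k1) * (if j = \<sigma> i then JU_skew_sign m n i else 0)"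
proof (cases "i < 2*m")
  case True
  then show ?thesis using same_block i j g12 pencil_block_entry_persymmetric[of i m j k2 l2]
    by (simp add: index_G_mat \<sigma>_def block_rev_def JU_skew_sign_def)
next
  case False
  obtain a a' where a: "i - 2*m = a" "\<sigma> i = 2*m + a'" "a < 2*n" "a' < 2*n"
    "2*n - Suc a = a'" "2*n - Suc a' = a"
    using block_rev_upper[of m i n] False i unfolding \<sigma>_def by auto
  obtain b b' where b: "j - 2*m = b" "\<sigma> j = 2*m + b'" "b < 2*n" "b' < 2*n"
    "2*n - Suc b = b'" "2*n - Suc b' = b"
    using block_rev_upper[of m j n] False same_block j unfolding \<sigma>_def by auto
  have "(j = 2*m + a') = (b = a')" using False same_block b(1) by auto
  moreover have "pencil_block_entry n k1 b' a * - J_sign n b'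
      = - J_sign n a * pencil_block_entry n l1 a' b + (l1 - k1) * (if b = a' then - J_sign n a else 0)"
    using pencil_block_entry_persymmetric[of a n b k1 l1] a b
    by (cases "b = a'") (auto simp: algebra_simps)
  ultimately show ?thesis using False same_block i j g12 a b
    by (simp add: index_G_mat JU_skew_sign_def)
qed

lemma intertwining_entry_offdiagonal_blocks:
  assumes g12: "g12 \<in> carrier_mat (2*m) (2*n)" and i: "i < 2*m + 2*n" and j: "j < 2*m + 2*n"
    and cross_block: "(i < 2*m) \<noteq> (j < 2*m)"
  defines "\<sigma> \<equiv> block_rev (2*m) (2*n)"
  shows "G_mat m n g12 k1 k2 $$ (\<sigma> j, i) * JU_skew_sign m n (\<sigma> j)
       = JU_skew_sign m n i * G_mat m n g12 l1 l2 $$ (\<sigma> i, j)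
         + (if j < 2*m then l2 - k2 else l1 - k1) * (if j = \<sigma> i then JU_skew_sign m n i else 0)"
proof (cases "i < 2*m")
  case True
  obtain b b' where b: "j - 2*m = b" "\<sigma> j = 2*m + b'" "b < 2*n" "b' < 2*n"
    "2*n - Suc b = b'" "2*n - Suc b' = b"
    using block_rev_upper[of m j n] True cross_block j unfolding \<sigma>_def by auto
  have "\<sigma> i = 2*m - Suc i" "j \<noteq> 2*m - Suc i" using True cross_block by (auto simp: \<sigma>_def block_rev_def)
  then show ?thesis using True cross_block i j g12 b
    by (simp add: index_G_mat g21_of_index JU_skew_sign_def J_sign_def; arith)
next
  case False
  obtain a a' where a: "i - 2*m = a" "\<sigma> i = 2*m + a'" "a < 2*n" "a' < 2*n"
    "2*n - Suc a = a'" "2*n - Suc a' = a"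
    using block_rev_upper[of m i n] False i unfolding \<sigma>_def by auto
  have "\<sigma> j = 2*m - Suc j" "j \<noteq> 2*m + a'" using False cross_block by (auto simp: \<sigma>_def block_rev_def)
  then show ?thesis using False cross_block i j g12 a
    by (simp add: index_G_mat g21_of_index JU_skew_sign_def J_sign_def; arith)
qed

lemma G_mat_intertwining:
  assumes g12: "g12 \<in> carrier_mat (2*m) (2*n)"
  shows "transpose_mat (G_mat m n g12 k1 k2) * JU_skew_mat m n
       = JU_skew_mat m n * G_mat m n g12 l1 l2
         + ((l2 - k2) \<cdot>\<^sub>m (JU_skew_mat m n * P1_mat m n)
            + (l1 - k1) \<cdot>\<^sub>m (JU_skew_mat m n * P2_mat m n))"
proof -
  let ?N = "2*m + 2*n" and ?\<sigma> = "block_rev (2*m) (2*n)" and ?q = "JU_skew_sign m n"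
  let ?Gk = "G_mat m n g12 k1 k2" and ?Gl = "G_mat m n g12 l1 l2"
  have \<sigma>: "\<And>i. i < ?N \<Longrightarrow> ?\<sigma> i < ?N \<and> ?\<sigma> (?\<sigma> i) = i" by (rule block_rev_involution)
  have GQ: "transpose_mat ?Gk * JU_skew_mat m n = mat ?N ?N (\<lambda>(i,j). ?Gk $$ (?\<sigma> j, i) * ?q (?\<sigma> j))"
    unfolding JU_skew_mat_def using g12 \<sigma> carrier_matD[OF G_mat_carrier[OF g12]]
    by (subst monomial_mat_mult_right[of ?N]) (auto intro!: eq_matI)
  have QG: "JU_skew_mat m n * ?Gl = mat ?N ?N (\<lambda>(i,j). ?q i * ?Gl $$ (?\<sigma> i, j))"
    unfolding JU_skew_mat_def using g12 \<sigma> by (subst monomial_mat_mult_left[of ?N]) auto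
  have QP1: "JU_skew_mat m n * P1_mat m n
      = mat ?N ?N (\<lambda>(i,j). (if j = ?\<sigma> i then ?q i else 0) * (if j < 2*m then 1 else 0))"
    unfolding P1_mat_diag
    by (subst mat_diag_mult_right[of _ ?N]) (auto simp: JU_skew_mat_def intro!: eq_matI)
  have QP2: "JU_skew_mat m n * P2_mat m n
      = mat ?N ?N (\<lambda>(i,j). (if j = ?\<sigma> i then ?q i else 0) * (if j < 2*m then 0 else 1))"
    unfolding P2_mat_diag
    by (subst mat_diag_mult_right[of _ ?N]) (auto simp: JU_skew_mat_def intro!: eq_matI)
  show ?thesis unfolding GQ QG QP1 QP2
  proof (rule eq_matI, goal_cases)
    case (1 i j)
    then have i: "i < ?N" and j: "j < ?N" by auto
    show ?case
      using intertwining_entry_diagonal_blocks[OF g12 i j, of k1 k2 l1 l2]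
        intertwining_entry_offdiagonal_blocks[OF g12 i j, of k1 k2 l1 l2] i j
      by (cases "(i < 2*m) = (j < 2*m)"; cases "j < 2*m") auto
  qed auto
qed

lemma G_mat_intertwining_self:
  assumes g12: "g12 \<in> carrier_mat (2*m) (2*n)"
  shows "transpose_mat (G_mat m n g12 l1 l2) * JU_skew_mat m n = JU_skew_mat m n * G_mat m n g12 l1 l2"
proof -
  have "JU_skew_mat m n * G_mat m n g12 l1 l2 \<in> carrier_mat (2*m + 2*n) (2*m + 2*n)"
    by (rule mult_carrier_mat[OF JU_skew_mat_carrier G_mat_carrier[OF g12]])
  moreover have "0 \<cdot>\<^sub>m (JU_skew_mat m n * P1_mat m n) + 0 \<cdot>\<^sub>m (JU_skew_mat m n * P2_mat m n)
      = 0\<^sub>m (2*m + 2*n) (2*m + 2*n)"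
    by (rule eq_matI) (auto simp: JU_skew_mat_def P1_mat_def P2_mat_def)
  ultimately show ?thesis using G_mat_intertwining[OF g12, of l1 l2 l1 l2] by simp
qed

lemma resolvent_pairing_relation:
  assumes g12: "g12 \<in> carrier_mat (2*m) (2*n)" and x: "x \<in> carrier_vec (2*m + 2*n)"
    and det_l: "det (G_mat m n g12 l1 l2) \<noteq> 0" and det_k: "det (G_mat m n g12 k1 k2) \<noteq> 0"
  defines "v \<equiv> minv (G_mat m n g12 l1 l2) *\<^sub>v x" and "w \<equiv> minv (G_mat m n g12 k1 k2) *\<^sub>v x"
  shows "(l2 - k2) * (w \<bullet> ((JU_skew_mat m n * P1_mat m n) *\<^sub>v v))
       + (l1 - k1) * (w \<bullet> ((JU_skew_mat m n * P2_mat m n) *\<^sub>v v)) = 0"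
proof -
  let ?N = "2*m + 2*n" and ?Q = "JU_skew_mat m n"
  have Gl: "G_mat m n g12 l1 l2 \<in> carrier_mat ?N ?N" and Gk: "G_mat m n g12 k1 k2 \<in> carrier_mat ?N ?N"
    using g12 by auto
  have v: "v \<in> carrier_vec ?N" and w: "w \<in> carrier_vec ?N"
    unfolding v_def w_def using minv_carrier[OF Gl] minv_carrier[OF Gk] x by auto
  have QP: "?Q * P1_mat m n \<in> carrier_mat ?N ?N" "?Q * P2_mat m n \<in> carrier_mat ?N ?N"
    by (rule mult_carrier_mat[OF JU_skew_mat_carrier P1_mat_carrier]
        mult_carrier_mat[OF JU_skew_mat_carrier P2_mat_carrier])+
  have "w \<bullet> (((l2 - k2) \<cdot>\<^sub>m (?Q * P1_mat m n) + (l1 - k1) \<cdot>\<^sub>m (?Q * P2_mat m n)) *\<^sub>v v) = 0"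
    by (rule intertwined_pairing_vanishes[OF JU_skew_mat_carrier Gl Gk _ v w transpose_JU_skew_mat
          G_mat_intertwining_self[OF g12] G_mat_intertwining_self[OF g12] G_mat_intertwining[OF g12]])
      (use QP in auto, simp add: v_def w_def mult_minv_mat_vec[OF Gl det_l x] mult_minv_mat_vec[OF Gk det_k x])
  then show ?thesis using scalar_prod_smult_add_mat_vec[OF QP v w] by simp
qed

lemma u_row_pairing:
  assumes g12: "g12 \<in> carrier_mat (2*m) (2*n)"
  obtains c where "\<And>P :: complex mat. P \<in> carrier_mat (2*m + 2*n) (2*m + 2*n) \<Longrightarrow>
    u_row m n g12 p k1 k2 \<bullet> (P *\<^sub>v uhat m n g12 p l1 l2)
    = c * ((minv (G_mat m n g12 k1 k2) *\<^sub>v e_vec m n)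
        \<bullet> ((JU_mat m n * P) *\<^sub>v (minv (G_mat m n g12 l1 l2) *\<^sub>v e_vec m n)))"
proof
  let ?N = "2*m + 2*n" and ?D = "JU_mat m n"
  define v where "v = minv (G_mat m n g12 l1 l2) *\<^sub>v e_vec m n"
  define w where "w = minv (G_mat m n g12 k1 k2) *\<^sub>v e_vec m n"
  have e: "e_vec m n \<in> carrier_vec ?N" by (simp add: e_vec_def)
  have v: "v \<in> carrier_vec ?N" and w: "w \<in> carrier_vec ?N"
    unfolding v_def w_def using mult_mat_vec_carrier[OF minv_carrier[OF G_mat_carrier[OF g12]] e] by auto
  define s where "s = ((k1 - \<i>/2) / (k1 + \<i>/2)) ^ n * ((k2 - \<i>/2) / (k2 + \<i>/2)) ^ m
      * (- \<i> * inverse ((k1 - \<i>/2) ^ n) * inverse ((k2 - \<i>/2) ^ m) * poly2 p k1 k2)"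
  define t where "t = - \<i> * inverse ((l1 - \<i>/2) ^ n) * inverse ((l2 - \<i>/2) ^ m) * poly2 p l1 l2"
  fix P :: "complex mat" assume P: "P \<in> carrier_mat ?N ?N"
  have "u_row m n g12 p k1 k2 = s \<cdot>\<^sub>v (transpose_mat ?D *\<^sub>v w)"
    unfolding u_row_def uhat_def JU_mat_four_block w_def[symmetric] s_def
    using w by (simp add: mult_mat_vec[of _ ?N ?N] smult_smult_assoc)
  moreover have "uhat m n g12 p l1 l2 = t \<cdot>\<^sub>v v"
    unfolding uhat_def v_def t_def ..
  ultimately have "u_row m n g12 p k1 k2 \<bullet> (P *\<^sub>v uhat m n g12 p l1 l2)
      = s * t * ((transpose_mat ?D *\<^sub>v w) \<bullet> (P *\<^sub>v v))"
    using P v w by (simp add: mult_mat_vec[OF P v])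
  also have "\<dots> = s * t * (w \<bullet> ((?D * P) *\<^sub>v v))"
    using transpose_vec_mult_scalar[OF JU_mat_carrier _ w, of "P *\<^sub>v v"] P v
    by (simp add: assoc_mult_mat_vec[OF JU_mat_carrier P v])
  finally show "u_row m n g12 p k1 k2 \<bullet> (P *\<^sub>v uhat m n g12 p l1 l2)
      = s * t * ((minv (G_mat m n g12 k1 k2) *\<^sub>v e_vec m n)
          \<bullet> ((?D * P) *\<^sub>v (minv (G_mat m n g12 l1 l2) *\<^sub>v e_vec m n)))"
    unfolding v_def w_def .
qed

text \<open>Only the invertibility of \<open>G(\<lambda>)\<close>, \<open>G(\<mu>)\<close> and \<open>\<lambda>\<^sub>p \<noteq> \<mu>\<^sub>p\<close> are used; the other
  hypotheses (on \<open>m\<close>, \<open>n\<close>, \<open>\<theta>\<close> and the poles \<open>\<plusminus>\<i>/2\<close>) at most affect the common scalar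
  factor \<open>c\<close> of \<open>u_row_pairing\<close>.\<close>

theorem lemma3p1:
  fixes m n :: nat and g12 :: "complex mat" and p :: "complex poly poly"
    and l1 l2 k1 k2 :: complex
  assumes "m \<ge> 1" and "n \<ge> 1"
    and "g12 \<in> carrier_mat (2*m) (2*n)"
    and theta_sq: "\<forall>x1 x2. (poly2 p x1 x2)\<^sup>2 = det (G_mat m n g12 x1 x2)"
    and theta_lead: "coeff (coeff p n) m = -1"
    and "det (G_mat m n g12 l1 l2) \<noteq> 0" and "det (G_mat m n g12 k1 k2) \<noteq> 0"
    and "l1 \<noteq> \<i>/2" and "l2 \<noteq> \<i>/2"
    and "k1 \<noteq> \<i>/2" and "k2 \<noteq> \<i>/2" and "k1 \<noteq> -\<i>/2" and "k2 \<noteq> -\<i>/2"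
    and "l1 \<noteq> k1" and "l2 \<noteq> k2"
  shows "\<i> * inverse (l1 - k1) * (u_row m n g12 p k1 k2 \<bullet> (P1_mat m n *\<^sub>v uhat m n g12 p l1 l2))
       = \<i> * inverse (l2 - k2) * (u_row m n g12 p k1 k2 \<bullet> (P2_mat m n *\<^sub>v uhat m n g12 p l1 l2))"
proof -
  let ?N = "2*m + 2*n" and ?Q = "JU_skew_mat m n"
  note g12 = assms(3)
  define v where "v = minv (G_mat m n g12 l1 l2) *\<^sub>v e_vec m n"
  define w where "w = minv (G_mat m n g12 k1 k2) *\<^sub>v e_vec m n"
  have dims: "dim_vec v = ?N" "dim_vec w = ?N"
    "dim_row (?Q * P2_mat m n) = ?N" "dim_col (?Q * P2_mat m n) = ?N"
    unfolding v_def w_def using minv_carrier[OF G_mat_carrier[OF g12]]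
      carrier_matD[OF mult_carrier_mat[OF JU_skew_mat_carrier P2_mat_carrier]] by (auto simp: e_vec_def)
  have relation:
    "(l2 - k2) * (w \<bullet> ((?Q * P1_mat m n) *\<^sub>v v)) + (l1 - k1) * (w \<bullet> ((?Q * P2_mat m n) *\<^sub>v v)) = 0"
    unfolding v_def w_def by (rule resolvent_pairing_relation[OF g12 _ assms(6,7)]) (simp add: e_vec_def)
  obtain c where c: "\<And>P. P \<in> carrier_mat ?N ?N \<Longrightarrow>
      u_row m n g12 p k1 k2 \<bullet> (P *\<^sub>v uhat m n g12 p l1 l2) = c * (w \<bullet> ((JU_mat m n * P) *\<^sub>v v))"
    using u_row_pairing[OF g12] unfolding v_def w_def by metis
  have cancel: "\<i> * inverse x * (c * a) = \<i> * inverse y * (- (c * b))"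
    if "x \<noteq> 0" "y \<noteq> 0" "y * a + x * b = 0" for x y a b :: complex
  proof -
    have a: "a = - (x * b) / y" using that by (simp add: field_simps add_eq_0_iff)
    show ?thesis unfolding a using that(1,2) by (simp add: field_simps)
  qed
  show ?thesis
    using cancel[OF _ _ relation] assms(14,15) dims
    by (simp add: c JU_mat_mult_P1 JU_mat_mult_P2)
qed

end
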